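(* Let $C=(1,c_2,c_3,c_4,c_5,c_6)$ be a system and $\ell=\lceil c_5/c_3\rceil$, and suppose $C$ satisfies (a), (b), or (c): (a) $C=(1,2,3,c_4,c_4+1,2c_4)$ and $c_4>4$; (b) $C=(1,c_2,2c_2-1,c_4,c_2+c_4-1,2c_4-1)$, $c_4\ge 3c_2-1$, $\mathrm{grd}_C(\ell c_3)\le\ell$, and $\mathrm{grd}_C(\ell c_3)=\ell c_3-c_5+1-\lfloor(\ell c_3-c_5)/c_2\rfloor(c_2-1)$; (c) $C=(1,c_2,2c_2,c_4,c_2+c_4,2c_4)$, $c_4\ge 3c_2-1$, $c_4\ne 3c_2$, $\mathrm{grd}_C(\ell c_3)\le\ell$, and $\mathrm{grd}_C(\ell c_3)=\ell c_3-c_5+1-\lfloor(\ell c_3-c_5)/c_2\rfloor(c_2-1)$. Then $C$ is canonical and the subsystem $(1,c_2,c_3,c_4,c_5)$ is noncanonical.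
   Context: A system is a tuple $C=(c_1,\dots,c_n)$ of integers with $1=c_1<c_2<\dots<c_n$; for $k\le n$, $(c_1,\dots,c_k)$ is a subsystem. For a positive integer $v$, $\mathrm{opt}_C(v)$ is the minimum of $\sum_i x_i$ over $x\in\mathbb{Z}_{\ge0}^n$ with $\sum_i c_ix_i=v$. The greedy representation of $v$ is produced by: for $i=n$ down to $1$, while $c_i\le$ remaining value, take a coin $c_i$. $\mathrm{grd}_C(v)$ is its number of coins. A positive integer $w$ is a counterexample if $\mathrm{opt}_C(w)<\mathrm{grd}_C(w)$; $C$ is canonical if it has none, noncanonical otherwise. *)

theory Defs
  imports Main
begin

definition is_system :: "nat list \<Rightarrow> bool" where
  "is_system C \<longleftrightarrow> C \<noteq> [] \<and> C ! 0 = 1 \<and> sorted_wrt (<) C"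

definition opt :: "nat list \<Rightarrow> nat \<Rightarrow> nat" where
  "opt C v = (LEAST k. \<exists>x::nat list. length x = length C \<and>
      (\<Sum>i<length C. C ! i * x ! i) = v \<and> (\<Sum>i<length C. x ! i) = k)"

text \<open>Greedy: process coins from largest to smallest; the while loop
  "while c <= remaining, take c" takes exactly (remaining div c) coins.\<close>
fun grd_desc :: "nat list \<Rightarrow> nat \<Rightarrow> nat" where
  "grd_desc [] v = 0"
| "grd_desc (c # cs) v = v div c + grd_desc cs (v mod c)"

definition grd :: "nat list \<Rightarrow> nat \<Rightarrow> nat" where
  "grd C v = grd_desc (rev C) v"

definition counterexample :: "nat list \<Rightarrow> nat \<Rightarrow> bool" where
  "counterexample C w \<longleftrightarrow> w > 0 \<and> opt C w < grd C w"

definition canonical :: "nat list \<Rightarrow> bool" where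
  "canonical C \<longleftrightarrow> (\<forall>w. \<not> counterexample C w)"

end

theory Submission
  imports Defs
begin

text \<open>
  Write the system as \<open>(1, a, c3, b, b + e, 2b - f)\<close> with \<open>a = c2\<close>, \<open>b = c4\<close>, \<open>e = c3 - a\<close>
  and \<open>f \<le> 1\<close>. Canonicity follows from the one-step criterion: if \<open>grd w \<le> 1 + grd (w - c)\<close>
  for every coin \<open>c \<le> w\<close>, induction on the number of coins of an arbitrary representation
  shows that greedy is optimal. Greedy pays \<open>w\<close> with \<open>w div (2b - f)\<close> top coins and then the
  residue, so the criterion reduces to inequalities between residues \<open>r < 2b - f\<close>: subtracting
  a coin \<open>c \<le> r\<close>, and wrapping around when \<open>r < c\<close> (then \<open>w - c\<close> has one top coin less).
  Below \<open>b\<close> the residue is paid by \<open>(1, a, c3)\<close>, which is canonical with an explicit greedy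
  count \<open>grd3\<close>. The delicate inequalities are lower bounds for \<open>grd3\<close> just below \<open>b\<close>. They
  come from the hypotheses on \<open>grd (\<ell> c3)\<close>, which amount to \<open>grd3 d \<le> \<ell> - 1\<close> for the
  overshoot \<open>d = \<ell> c3 - c5 < c3\<close>: as \<open>grd3\<close> is subadditive, \<open>grd3 x \<ge> grd3 (x + d) - (\<ell> - 1)\<close>,
  and \<open>x + d\<close> is explicit for the relevant \<open>x\<close>.

  The subsystem \<open>(1, a, c3, b, c5)\<close> is not canonical: \<open>2b = b + b\<close>, but greedy takes \<open>c5\<close>
  and then needs at least two coins for \<open>2b - c5\<close>.
\<close>

lemma grd_desc_0 [simp]: "grd_desc cs 0 = 0"
  by (induction cs) auto

lemma grd_desc_takes_coin:
  "0 < grd_desc cs v \<Longrightarrow> \<exists>c\<in>set cs. c \<le> v \<and> grd_desc cs v = Suc (grd_desc cs (v - c))"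
proof (induction cs arbitrary: v)
  case (Cons c cs)
  show ?case
  proof (cases "c \<le> v \<and> 0 < c")
    case True
    then have "v div c = Suc ((v - c) div c)" "v mod c = (v - c) mod c"
      by (simp_all add: le_div_geq le_mod_geq)
    then show ?thesis
      using True by auto
  next
    case False
    then have "v div c = 0" "v mod c = v"
      by auto
    then obtain c' where c': "c' \<in> set cs" "c' \<le> v" "grd_desc cs v = Suc (grd_desc cs (v - c'))"
      using Cons by auto
    have "(v - c') div c = 0" "(v - c') mod c = v - c'"
      using False by auto
    then show ?thesis
      using c' \<open>v div c = 0\<close> \<open>v mod c = v\<close> by auto
  qed
qed simp

lemma grd_desc_eq_0: "grd_desc cs v = 0 \<Longrightarrow> 1 \<in> set cs \<Longrightarrow> v = 0"
proof (induction cs arbitrary: v)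
  case (Cons c cs)
  then have "v div c = 0" and "grd_desc cs (v mod c) = 0"
    by simp_all
  show ?case
  proof (cases "c = 1")
    case False
    then have "v mod c = 0"
      using Cons.IH \<open>grd_desc cs (v mod c) = 0\<close> Cons.prems(2) by simp
    then show ?thesis
      using \<open>v div c = 0\<close> div_mult_mod_eq[of v c] by simp
  qed (use \<open>v div c = 0\<close> in simp)
qed simp

lemma opt_le:
  assumes "length x = length C" "(\<Sum>i<length C. C ! i * x ! i) = v"
  shows "opt C v \<le> (\<Sum>i<length C. x ! i)"
  unfolding opt_def by (rule Least_le) (use assms in blast)

lemma opt_attained:
  assumes "C \<noteq> []" "C ! 0 = 1"
  shows "\<exists>x. length x = length C \<and> (\<Sum>i<length C. C ! i * x ! i) = v
           \<and> (\<Sum>i<length C. x ! i) = opt C v"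
  unfolding opt_def
proof (rule LeastI_ex)
  obtain cs where C: "C = 1 # cs"
    using assms by (cases C) auto
  let ?x = "v # replicate (length cs) 0"
  have "length ?x = length C \<and> (\<Sum>i<length C. C ! i * ?x ! i) = v \<and> (\<Sum>i<length C. ?x ! i) = v"
    unfolding C length_Cons sum.lessThan_Suc_shift by simp
  then show "\<exists>k x. length x = length C \<and> (\<Sum>i<length C. C ! i * x ! i) = v
      \<and> (\<Sum>i<length C. x ! i) = k"
    by blast
qed

lemma sum_update_decrement:
  fixes x :: "nat list" and h :: "nat \<Rightarrow> nat"
  assumes i: "i < length x" "0 < x ! i"
  shows "(\<Sum>j<length x. h j * x[i := x ! i - 1] ! j) + h i = (\<Sum>j<length x. h j * x ! j)"
proof -
  have "(\<Sum>j<length x. h j * x ! j)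
      = (\<Sum>j<length x. h j * x[i := x ! i - 1] ! j + (if j = i then h i else 0))"
  proof (rule sum.cong)
    fix j
    show "h j * x ! j = h j * x[i := x ! i - 1] ! j + (if j = i then h i else 0)"
      using i by (cases "x ! i") (auto simp: nth_list_update)
  qed simp
  then show ?thesis
    using i by (simp add: sum.distrib)
qed

lemma grd_le_coin_count:
  assumes step: "\<And>w c. c \<in> set C \<Longrightarrow> c \<le> w \<Longrightarrow> grd C w \<le> Suc (grd C (w - c))"
  shows "length x = length C \<Longrightarrow> grd C (\<Sum>i<length C. C ! i * x ! i) \<le> (\<Sum>i<length C. x ! i)"
proof (induction "\<Sum>i<length C. x ! i" arbitrary: x)
  case 0
  then show ?case
    by (simp add: grd_def)
next
  case (Suc k)
  then obtain i where i: "i < length x" "0 < x ! i"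
    by (metis (no_types, lifting) lessThan_iff neq0_conv sum.neutral nat.simps(3))
  define x' where "x' = x[i := x ! i - 1]"
  have len: "length x' = length C"
    using Suc.prems by (simp add: x'_def)
  have count: "(\<Sum>j<length C. x' ! j) = k"
    using sum_update_decrement[OF i, of "\<lambda>_. 1"] Suc by (simp add: x'_def)
  have amount: "(\<Sum>j<length C. C ! j * x' ! j) + C ! i = (\<Sum>j<length C. C ! j * x ! j)"
    using sum_update_decrement[OF i, of "(!) C"] Suc.prems by (simp add: x'_def)
  have "grd C (\<Sum>j<length C. C ! j * x ! j) \<le> Suc (grd C (\<Sum>j<length C. C ! j * x' ! j))"
    using step[of "C ! i"] i Suc.prems amount by (metis add_diff_cancel_right' le_add2 nth_mem)
  also have "\<dots> \<le> Suc k"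
    using Suc.hyps(1)[of x'] count len by simp
  finally show ?case
    using Suc.hyps(2) by simp
qed

lemma canonicalI:
  assumes "C \<noteq> []" "C ! 0 = 1"
    and step: "\<And>w c. c \<in> set C \<Longrightarrow> c \<le> w \<Longrightarrow> grd C w \<le> Suc (grd C (w - c))"
  shows "canonical C"
  unfolding canonical_def counterexample_def
  using opt_attained[OF assms(1,2)] grd_le_coin_count[OF step] by (metis not_less)

lemma grd_subadditive:
  assumes "1 \<in> set C"
    and step: "\<And>w c. c \<in> set C \<Longrightarrow> c \<le> w \<Longrightarrow> grd C w \<le> Suc (grd C (w - c))"
  shows "grd C (x + y) \<le> grd C x + grd C y"
proof (induction y rule: less_induct)
  case (less y)
  show ?case
  proof (cases "grd C y")
    case 0
    then show ?thesis
      using grd_desc_eq_0[of "rev C" y] assms(1) by (simp add: grd_def)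
  next
    case (Suc n)
    then obtain c where c: "c \<in> set C" "c \<le> y" "grd C y = Suc (grd C (y - c))"
      using grd_desc_takes_coin[of "rev C" y] by (auto simp: grd_def)
    then have "0 < c"
      by (metis diff_zero gr0I n_not_Suc_n)
    have "grd C (x + y) \<le> Suc (grd C (x + (y - c)))"
      using step[of c "x + y"] c by simp
    also have "\<dots> \<le> Suc (grd C x + grd C (y - c))"
      using less[of "y - c"] \<open>0 < c\<close> c(2) by simp
    finally show ?thesis
      using c(3) by simp
  qed
qed

lemma grd_append: "grd (C @ [c]) w = w div c + grd C (w mod c)"
  by (simp add: grd_def)

lemma grd_append_step:
  assumes c: "0 < c" "c < c'"
    and step: "\<And>r. r < c' \<Longrightarrow> c \<le> r \<Longrightarrow> grd C r \<le> Suc (grd C (r - c))"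
    and wrap: "\<And>r. r < c \<Longrightarrow> grd C r \<le> grd C (r + c' - c)"
    and "c \<le> w"
  shows "grd (C @ [c']) w \<le> Suc (grd (C @ [c']) (w - c))"
proof -
  define k r where "k = w div c'" and "r = w mod c'"
  have w: "w = c' * k + r" "r < c'"
    using c unfolding k_def r_def by simp_all
  show ?thesis
  proof (cases "c \<le> r")
    case True
    then have "w - c = c' * k + (r - c)"
      using w by simp
    then have "(w - c) div c' = k" "(w - c) mod c' = r - c"
      using w by simp_all
    then show ?thesis
      using step[OF w(2) True] unfolding grd_append k_def r_def by simp
  next
    case False
    then obtain k' where k': "k = Suc k'"
      using w \<open>c \<le> w\<close> by (cases k) auto
    then have "w - c = c' * k' + (r + c' - c)" "r + c' - c < c'"
      using w False c by auto
    then have "(w - c) div c' = k'" "(w - c) mod c' = r + c' - c"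
      by simp_all
    then show ?thesis
      using wrap[of r] False k' unfolding grd_append k_def[symmetric] r_def[symmetric] by simp
  qed
qed

lemma grd_append_step_top:
  assumes "0 < c" "c \<le> w"
  shows "grd (C @ [c]) w = Suc (grd (C @ [c]) (w - c))"
  using assms by (simp add: grd_append le_div_geq le_mod_geq)

text \<open>
  \<open>grd3\<close> avoids writing \<open>grd [1, a, c]\<close>, which the simplifier rewrites to
  \<open>grd [Suc 0, a, c]\<close>.
\<close>

definition grd3 :: "nat \<Rightarrow> nat \<Rightarrow> nat \<Rightarrow> nat" where
  "grd3 a c x = grd [1, a, c] x"

lemma grd3_0 [simp]: "grd3 a c 0 = 0"
  by (simp add: grd3_def grd_def)

locale three_coin_system =
  fixes a c :: nat
  assumes a_ge_2: "2 \<le> a" and a_less_c: "a < c" and c_le_2a: "c \<le> 2 * a"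
begin

lemma grd_eval:
  assumes "s < c"
  shows "grd3 a c (c * q + s) = q + (if s < a then s else Suc (s - a))"
proof -
  have "s < 2 * a"
    using assms c_le_2a by simp
  then have "s div a = (if s < a then 0 else 1)" "s mod a = (if s < a then s else s - a)"
    using a_ge_2 by (auto simp: div_if mod_if)
  then show ?thesis
    using assms by (simp add: grd3_def grd_def)
qed

lemma decompose_mod_c:
  obtains q s where "x = c * q + s" "s < c"
  using a_less_c mod_less_divisor mult_div_mod_eq by (metis gr_zeroI not_less0)

lemma grd_eval_low: "x = c * q + s \<Longrightarrow> s < a \<Longrightarrow> grd3 a c x = q + s"
  using grd_eval[of s q] a_less_c by simp

lemma grd_eval_high: "x = c * q + s \<Longrightarrow> a \<le> s \<Longrightarrow> s < c \<Longrightarrow> grd3 a c x = q + Suc (s - a)"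
  using grd_eval[of s q] by simp

lemma grd_below_a: "x < a \<Longrightarrow> grd3 a c x = x"
  using grd_eval[of x 0] a_less_c by simp

lemma grd_below_c: "a \<le> x \<Longrightarrow> x < c \<Longrightarrow> grd3 a c x = Suc (x - a)"
  using grd_eval[of x 0] by simp

lemma grd_below_c_int: "x < c \<Longrightarrow> int (grd3 a c x) = int x - (int x div int a) * (int a - 1)"
proof (cases "x < a")
  case False
  moreover assume "x < c"
  ultimately have "x div a = 1"
    using c_le_2a by (simp add: div_if)
  then have "int x div int a = 1"
    by (metis of_nat_1 zdiv_int)
  then show ?thesis
    using False \<open>x < c\<close> grd_below_c by simp
qed (simp add: grd_below_a)

lemma grd_pos: "0 < x \<Longrightarrow> 0 < grd3 a c x"
  by (cases rule: decompose_mod_c[of x]) (auto simp: grd_eval)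

lemma grd_ge_2:
  assumes "a < x" "x \<noteq> c"
  shows "2 \<le> grd3 a c x"
proof -
  obtain q s where x: "x = c * q + s" "s < c"
    by (rule decompose_mod_c)
  have "grd3 a c x = q + (if s < a then s else Suc (s - a))"
    using x grd_eval by simp
  then show ?thesis
    using assms x a_ge_2 by (cases q; cases "q = 1") auto
qed

context
  assumes two_a_le: "2 * a \<le> c + 1"
begin

lemma grd_step:
  assumes coin: "d = 1 \<or> d = a \<or> d = c" and "d \<le> x"
  shows "grd3 a c x \<le> Suc (grd3 a c (x - d))"
proof -
  obtain q s where x: "x = c * q + s" "s < c"
    by (rule decompose_mod_c)
  have gx: "grd3 a c x = q + (if s < a then s else Suc (s - a))"
    using x grd_eval by simp
  show ?thesis
  proof (cases "d \<le> s")
    case True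
    then have "x - d = c * q + (s - d)"
      using x by simp
    then have "grd3 a c (x - d) = q + (if s - d < a then s - d else Suc (s - d - a))"
      using grd_eval[of "s - d" q] x by simp
    then show ?thesis
      using gx x True coin two_a_le c_le_2a by auto
  next
    case False
    then obtain q' where q: "q = Suc q'"
      using x assms by (cases q) auto
    have "0 < d" "d \<le> c"
      using coin a_ge_2 a_less_c by auto
    then have "x - d = c * q' + (c + s - d)" "c + s - d < c"
      using x q False by auto
    then have "grd3 a c (x - d) = q' + (if c + s - d < a then c + s - d else Suc (c + s - d - a))"
      using grd_eval[of "c + s - d" q'] False by simp
    then show ?thesis
      using gx q x False coin two_a_le by auto
  qed
qed

lemma grd3_subadditive: "grd3 a c (x + y) \<le> grd3 a c x + grd3 a c y"
  using grd_subadditive[of "[1, a, c]"] grd_step unfolding grd3_def by auto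

lemma grd_le_shift: "grd3 a c x \<le> grd3 a c (x + (c - a))"
proof -
  obtain q s where x: "x = c * q + s" "s < c"
    by (rule decompose_mod_c)
  have gx: "grd3 a c x = q + (if s < a then s else Suc (s - a))"
    using x grd_eval by simp
  show ?thesis
  proof (cases "s < a")
    case True
    then have "x + (c - a) = c * q + (s + c - a)" "s + c - a < c"
      using x a_less_c by auto
    then have "grd3 a c (x + (c - a))
        = q + (if s + c - a < a then s + c - a else Suc (s + c - a - a))"
      using grd_eval[of "s + c - a" q] by simp
    then show ?thesis
      using gx True two_a_le a_less_c by (simp; arith)
  next
    case False
    then have "x + (c - a) = c * Suc q + (s - a)" "s - a < c"
      using x a_less_c by auto
    then have "grd3 a c (x + (c - a)) = Suc q + (s - a)"
      using grd_eval[of "s - a" "Suc q"] x c_le_2a by (simp del: mult_Suc_right)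
    then show ?thesis
      using gx False by simp
  qed
qed

end

end

text \<open>
  In the theorem, \<open>b = c4\<close>, \<open>d = \<ell> c3 - c5\<close> and \<open>m = \<ell> - 2\<close>, where \<open>c5 = b + c3 - a\<close>;
  \<open>grd_d\<close> is what the hypotheses on \<open>grd (\<ell> c3)\<close> amount to.
\<close>

locale overshoot = three_coin_system a c3 for a c3 +
  fixes b d m :: nat
  assumes two_a_le_c3: "2 * a \<le> c3 + 1"
    and b_plus_d: "b + d = c3 * Suc m + a"
    and grd_d: "grd3 a c3 d \<le> Suc m"
    and two_a_le_b: "2 * a \<le> b"
begin

lemma grd_add_d: "grd3 a c3 (x + d) \<le> grd3 a c3 x + Suc m"
  using grd3_subadditive[OF two_a_le_c3, of x d] grd_d by simp

lemma le_grd_b_minus_a: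
  assumes "t < a"
  shows "t \<le> grd3 a c3 (b - a + t)"
proof -
  have "grd3 a c3 (b - a + t + d) = Suc m + t"
    by (rule grd_eval_low) (use assms b_plus_d two_a_le_b in simp_all)
  then show ?thesis
    using grd_add_d[of "b - a + t"] by simp
qed

lemma le_grd_b_minus_c3:
  assumes "t < c3 - a"
  shows "t \<le> grd3 a c3 (b - c3 + t)"
proof -
  have "grd3 a c3 (b - c3 + t + d) = m + Suc (a + t - a)"
    by (rule grd_eval_high) (use assms b_plus_d two_a_le_b c_le_2a in simp_all)
  then show ?thesis
    using grd_add_d[of "b - c3 + t"] by simp
qed

lemma le_Suc_grd_b_minus_2a:
  assumes "r < a"
  shows "r \<le> Suc (grd3 a c3 (b - 2 * a + r))"
proof -
  have x: "b - 2 * a + r + d = c3 * m + (c3 - a + r)"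
    using b_plus_d two_a_le_b a_less_c by simp
  have "m + r \<le> grd3 a c3 (b - 2 * a + r + d)"
  proof (cases "c3 - a + r < a")
    case True
    then show ?thesis
      using grd_eval_low[OF x] a_less_c by simp
  next
    case False
    then show ?thesis
      using grd_eval_high[OF x] assms two_a_le_c3 by simp
  qed
  then show ?thesis
    using grd_add_d[of "b - 2 * a + r"] by simp
qed

lemma le_Suc_grd_b_minus_a_c3:
  assumes "r < a" "a + c3 \<le> b + r"
  shows "r \<le> Suc (grd3 a c3 (b + r - (a + c3)))"
proof -
  have "grd3 a c3 (b + r - (a + c3) + d) = m + r"
    by (rule grd_eval_low) (use assms b_plus_d in simp_all)
  then show ?thesis
    using grd_add_d[of "b + r - (a + c3)"] by simp
qed

end

lemma overshoot_exists:
  fixes a c3 b c5 l G :: nat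
  assumes three: "three_coin_system a c3" and two_a_le_c3: "2 * a \<le> c3 + 1"
    and c5: "c5 = b + c3 - a" and two_a_le_b: "2 * a \<le> b"
    and l: "l = (c5 + c3 - 1) div c3" and G_le: "G \<le> l"
    and G_eq: "int G = int (l * c3) - int c5 + 1
      - ((int (l * c3) - int c5) div int a) * (int a - 1)"
  shows "\<exists>d m. overshoot a c3 b d m"
proof -
  interpret three_coin_system a c3
    by (rule three)
  have "l * c3 \<le> c5 + c3 - 1" "c5 + c3 - 1 < l * c3 + c3"
    unfolding l
    using a_less_c div_mult_mod_eq[of "c5 + c3 - 1" c3] mod_less_divisor[of c3 "c5 + c3 - 1"]
    by linarith+
  then have lc3: "c5 \<le> l * c3" "l * c3 < c5 + c3"
    using a_less_c by linarith+
  define d where "d = l * c3 - c5"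
  have "1 * c3 < l * c3"
    using lc3 c5 two_a_le_b a_ge_2 by linarith
  then have "2 \<le> l"
    by (metis Suc_1 Suc_leI mult_less_cancel2)
  then obtain m where m: "l = m + 2"
    by (metis add.commute le_Suc_ex)
  have "int (grd3 a c3 d) + 1 = int G"
    using G_eq grd_below_c_int[of d] lc3 unfolding d_def by simp
  then have "grd3 a c3 d \<le> Suc m"
    using G_le m by linarith
  moreover have "b + d = c3 * Suc m + a"
    using lc3 c5 m two_a_le_b a_less_c unfolding d_def by (simp add: algebra_simps)
  ultimately have "overshoot a c3 b d m"
    by unfold_locales (use two_a_le_c3 two_a_le_b in auto)
  then show ?thesis
    by blast
qed

text \<open>
  Cases (b) and (c) of the theorem have \<open>f = 2a - c3\<close>, case (a) has \<open>a = 2\<close>, \<open>c3 = 3\<close>, \<open>f = 0\<close>.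
  The last seven assumptions are the lower bounds for \<open>grd3\<close> needed where a residue crosses
  \<open>b\<close> or \<open>b + e\<close>.
\<close>

locale six_coin_system = three_coin_system a c3 for a c3 +
  fixes b e f :: nat
  assumes two_a_le_c3: "2 * a \<le> c3 + 1"
    and c3_less_b: "c3 < b"
    and e_def: "e = c3 - a"
    and f_le_1: "f \<le> 1"
    and b_large: "2 * c3 + f \<le> a + b + 1"
    and f_e: "f + e = 1 \<or> f + e = a"
    and f_2e: "f + 2 * e = a \<or> f + 2 * e = c3"
    and le_grd_b_minus_a: "\<And>t. t < a \<Longrightarrow> t \<le> grd3 a c3 (b - a + t)"
    and le_grd_b_minus_c3: "\<And>t. t < e \<Longrightarrow> t \<le> grd3 a c3 (b - c3 + t)"
    and le_Suc_grd_b_minus_f_c3: "\<And>r. r < a \<Longrightarrow> r \<le> Suc (grd3 a c3 (b - f - c3 + r))"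
    and le_Suc_grd_wrap_c3_low: "\<And>r. r < a \<Longrightarrow> b + e \<le> r + (2 * b - f) - c3
      \<Longrightarrow> r \<le> Suc (grd3 a c3 (r + (2 * b - f) - c3 - (b + e)))"
    and le_grd_wrap_c3_high: "\<And>t. t < e \<Longrightarrow> b + e \<le> a + t + (2 * b - f) - c3
      \<Longrightarrow> t \<le> grd3 a c3 (a + t + (2 * b - f) - c3 - (b + e))"
    and le_grd_wrap_b_e_low: "\<And>r. r < f + e \<Longrightarrow> r \<le> grd3 a c3 (r + (2 * b - f) - (b + e))"
    and le_grd_wrap_b_e_high:
      "\<And>t. t < e \<Longrightarrow> t \<le> grd3 a c3 (b + t + (2 * b - f) - 2 * (b + e))"
begin

lemma parameter_bounds: "1 \<le> e" "e \<le> a" "c3 + f \<le> b" "f + 2 * e \<le> b" "a \<le> b" "e + f < b"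
  using a_ge_2 a_less_c c_le_2a two_a_le_c3 e_def f_le_1 b_large c3_less_b by auto

lemma grd_le_shift_e: "grd3 a c3 x \<le> grd3 a c3 (x + e)"
  using grd_le_shift[OF two_a_le_c3] e_def by simp

lemma grd_mid_f_e:
  assumes "f + e \<le> r" "r < f + 2 * e"
  shows "grd3 a c3 r \<le> Suc (r - (f + e))"
  using f_e
proof
  assume "f + e = 1"
  then have "r = 1"
    using assms e_def a_less_c by auto
  then show ?thesis
    using grd_below_a a_ge_2 by simp
next
  assume "f + e = a"
  then show ?thesis
    using assms grd_below_c e_def a_less_c by simp
qed

definition grd_res :: "nat \<Rightarrow> nat" where
  "grd_res r = (if b + e \<le> r then Suc (grd3 a c3 (r - (b + e)))
    else if b \<le> r then Suc (r - b) else grd3 a c3 r)"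

lemma grd_res_below_b: "r < b \<Longrightarrow> grd_res r = grd3 a c3 r"
  by (simp add: grd_res_def)

lemma grd_res_below_b_e: "b \<le> r \<Longrightarrow> r < b + e \<Longrightarrow> grd_res r = Suc (r - b)"
  by (simp add: grd_res_def)

lemma grd_res_above_b_e: "b + e \<le> r \<Longrightarrow> grd_res r = Suc (grd3 a c3 (r - (b + e)))"
  by (simp add: grd_res_def)

lemma grd_eq_grd_res:
  assumes "r < 2 * b - f"
  shows "grd [1, a, c3, b, b + e] r = grd_res r"
proof -
  consider "b + e \<le> r" | "b \<le> r" "r < b + e" | "r < b"
    by linarith
  then show ?thesis
  proof cases
    case 1
    have "r div (b + e) = 1" "r mod (b + e) = r - (b + e)" "r - (b + e) < b"
      using 1 assms parameter_bounds by (simp_all add: le_div_geq le_mod_geq)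
    then show ?thesis
      using grd_res_above_b_e[OF 1] by (simp add: grd_def grd3_def)
  next
    case 2
    have "r div (b + e) = 0" "r mod (b + e) = r" "r div b = 1" "r mod b = r - b" "r - b < a"
      using 2 parameter_bounds by (simp_all add: le_div_geq le_mod_geq)
    then show ?thesis
      using grd_res_below_b_e[OF 2] grd_below_a[of "r - b"] by (simp add: grd_def grd3_def)
  next
    case 3
    then show ?thesis
      using grd_res_below_b[OF 3] by (simp add: grd_def grd3_def)
  qed
qed

lemma grd_res_step_1:
  assumes "1 \<le> r"
  shows "grd_res r \<le> Suc (grd_res (r - 1))"
proof -
  consider "r < b" | "r = b" | "b < r" "r < b + e" | "r = b + e" | "b + e < r"
    by linarith
  then show ?thesis
  proof cases
    case 1
    then show ?thesis
      using grd_res_below_b grd_step[OF two_a_le_c3, of 1 r] assms by simp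
  next
    case 2
    then show ?thesis
      using grd_res_below_b_e parameter_bounds by simp
  next
    case 3
    then have "grd_res (r - 1) = Suc (r - 1 - b)"
      by (intro grd_res_below_b_e) linarith+
    then show ?thesis
      using grd_res_below_b_e[of r] 3 by simp
  next
    case 4
    then show ?thesis
      using grd_res_above_b_e[of r] by simp
  next
    case 5
    then have "grd_res (r - 1) = Suc (grd3 a c3 (r - 1 - (b + e)))"
      using grd_res_above_b_e by simp
    moreover have "r - 1 - (b + e) = r - (b + e) - 1"
      by simp
    ultimately show ?thesis
      using grd_res_above_b_e[of r] 5 grd_step[OF two_a_le_c3, of 1 "r - (b + e)"] by simp
  qed
qed

lemma grd_res_step_a:
  assumes "a \<le> r"
  shows "grd_res r \<le> Suc (grd_res (r - a))"
proof -
  consider "r < b" | "b \<le> r" "r < b + e" | "b + e + a \<le> r" | "b + e \<le> r" "r < b + e + a"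
    by linarith
  then show ?thesis
  proof cases
    case 1
    then show ?thesis
      using grd_res_below_b[of r] grd_res_below_b[of "r - a"] grd_step[OF two_a_le_c3, of a r] assms
      by simp
  next
    case 2
    then have "grd_res (r - a) = grd3 a c3 (b - a + (r - b))" "r - b < a"
      using grd_res_below_b[of "r - a"] parameter_bounds by simp_all
    then show ?thesis
      using le_grd_b_minus_a[of "r - b"] grd_res_below_b_e[of r] 2 by simp
  next
    case 3
    then have "grd_res (r - a) = Suc (grd3 a c3 (r - a - (b + e)))"
      using grd_res_above_b_e by simp
    moreover have "r - a - (b + e) = r - (b + e) - a"
      by simp
    ultimately show ?thesis
      using grd_res_above_b_e[of r] 3 grd_step[OF two_a_le_c3, of a "r - (b + e)"] by simp
  next
    case 4
    then have "grd3 a c3 (r - (b + e)) = r - (b + e)"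
      using grd_below_a by simp
    show ?thesis
    proof (cases "b \<le> r - a")
      case True
      then have "grd_res (r - a) = Suc (r - a - b)"
        using 4 parameter_bounds by (intro grd_res_below_b_e) linarith+
      then show ?thesis
        using grd_res_above_b_e[of r] 4 \<open>grd3 a c3 (r - (b + e)) = r - (b + e)\<close> two_a_le_c3 e_def
        by (simp, arith)
    next
      case False
      then have "r - (b + e) = 0"
        using 4 e_def two_a_le_c3 by arith
      then show ?thesis
        using grd_res_above_b_e[of r] 4 by simp
    qed
  qed
qed

lemma grd_res_step_c3:
  assumes "c3 \<le> r"
  shows "grd_res r \<le> Suc (grd_res (r - c3))"
proof -
  consider "r < b" | "b \<le> r" "r < b + e" | "b + e + c3 \<le> r"
    | "b + e \<le> r" "r < b + e + c3" "b \<le> r - c3"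
    | "b + e \<le> r" "r - c3 < b"
    by linarith
  then show ?thesis
  proof cases
    case 1
    then show ?thesis
      using grd_res_below_b[of r] grd_res_below_b[of "r - c3"] grd_step[OF two_a_le_c3, of c3 r] assms
      by simp
  next
    case 2
    then have "grd_res (r - c3) = grd3 a c3 (b - c3 + (r - b))" "r - b < e"
      using grd_res_below_b[of "r - c3"] parameter_bounds e_def a_less_c by simp_all
    then show ?thesis
      using le_grd_b_minus_c3[of "r - b"] grd_res_below_b_e[of r] 2 by simp
  next
    case 3
    then have "grd_res (r - c3) = Suc (grd3 a c3 (r - c3 - (b + e)))"
      using grd_res_above_b_e by simp
    moreover have "r - c3 - (b + e) = r - (b + e) - c3"
      by simp
    ultimately show ?thesis
      using grd_res_above_b_e[of r] 3 grd_step[OF two_a_le_c3, of c3 "r - (b + e)"] by simp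
  next
    case 4
    then have "r - c3 < b + e"
      using parameter_bounds by linarith
    then have "grd_res (r - c3) = Suc (r - c3 - b)"
      using grd_res_below_b_e 4 by simp
    have "a \<le> r - (b + e)" "r - (b + e) < c3" "r - (b + e) - a = r - c3 - b"
      using 4 e_def a_less_c assms by arith+
    then show ?thesis
      using grd_below_c[of "r - (b + e)"] \<open>grd_res (r - c3) = Suc (r - c3 - b)\<close>
        grd_res_above_b_e[of r] 4 by simp
  next
    case 5
    then have res: "grd_res (r - c3) = grd3 a c3 (r - c3)"
      using grd_res_below_b by simp
    have "r - (b + e) < a" "b - a + (r - (b + e)) = r - c3"
      using 5 e_def a_less_c parameter_bounds by arith+
    then have "grd3 a c3 (r - (b + e)) \<le> grd3 a c3 (r - c3)"
      using le_grd_b_minus_a[of "r - (b + e)"] grd_below_a by simp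
    then show ?thesis
      using res grd_res_above_b_e[of r] 5 by simp
  qed
qed

lemma grd_res_step_b:
  assumes "b \<le> r" "r < 2 * b - f"
  shows "grd_res r \<le> Suc (grd_res (r - b))"
proof (cases "r < b + e")
  case True
  then show ?thesis
    using grd_res_below_b_e[of r] grd_res_below_b[of "r - b"] grd_below_a[of "r - b"] assms parameter_bounds
    by simp
next
  case False
  then have "grd_res (r - b) = grd3 a c3 (r - (b + e) + e)"
    using grd_res_below_b[of "r - b"] assms parameter_bounds by simp
  then show ?thesis
    using grd_res_above_b_e[of r] False grd_le_shift_e[of "r - (b + e)"] by simp
qed

lemma grd_res_step_b_e:
  assumes "b + e \<le> r" "r < 2 * b - f"
  shows "grd_res r \<le> Suc (grd_res (r - (b + e)))"
  using grd_res_above_b_e[OF assms(1)] grd_res_below_b[of "r - (b + e)"] assms parameter_bounds by simp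

lemma grd_res_wrap_1: "r < 1 \<Longrightarrow> grd_res r \<le> grd_res (r + (2 * b - f) - 1)"
  using grd_res_below_b[of 0] parameter_bounds by simp

lemma grd_res_wrap_a:
  assumes "r < a"
  shows "grd_res r \<le> grd_res (r + (2 * b - f) - a)"
proof -
  have "grd_res r = r"
    using grd_res_below_b[of r] grd_below_a assms parameter_bounds by simp
  moreover have "b + e \<le> r + (2 * b - f) - a"
    using parameter_bounds e_def f_le_1 by simp
  then have "grd_res (r + (2 * b - f) - a) = Suc (grd3 a c3 (r + (2 * b - f) - a - (b + e)))"
    using grd_res_above_b_e by simp
  moreover have "r + (2 * b - f) - a - (b + e) = b - f - c3 + r"
    using parameter_bounds e_def f_le_1 a_less_c by simp
  ultimately show ?thesis
    using le_Suc_grd_b_minus_f_c3[OF assms] by simp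
qed

lemma grd_res_wrap_c3:
  assumes "r < c3"
  shows "grd_res r \<le> grd_res (r + (2 * b - f) - c3)"
proof (cases "b + e \<le> r + (2 * b - f) - c3")
  case True
  show ?thesis
  proof (cases "r < a")
    case True
    then have "grd_res r = r"
      using grd_res_below_b[of r] grd_below_a parameter_bounds by simp
    then show ?thesis
      using grd_res_above_b_e \<open>b + e \<le> r + (2 * b - f) - c3\<close>
        le_Suc_grd_wrap_c3_low[OF True \<open>b + e \<le> r + (2 * b - f) - c3\<close>] by simp
  next
    case False
    then have "grd_res r = Suc (r - a)" "a + (r - a) = r"
      using grd_res_below_b[of r] grd_below_c[of r] assms parameter_bounds by simp_all
    moreover have "r - a < e"
      using False assms e_def by linarith
    ultimately show ?thesis
      using grd_res_above_b_e True le_grd_wrap_c3_high[of "r - a"] by simp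
  qed
next
  case False
  then have "grd_res (r + (2 * b - f) - c3) = Suc (r + (2 * b - f) - c3 - b)"
    using grd_res_below_b_e parameter_bounds f_le_1 by simp
  moreover have "grd_res r \<le> Suc r"
    using grd_res_below_b[of r] grd_below_a[of r] grd_below_c[of r] assms parameter_bounds
    by (cases "r < a") simp_all
  ultimately show ?thesis
    using parameter_bounds f_le_1 by simp
qed

lemma grd_res_wrap_b:
  assumes "r < b"
  shows "grd_res r \<le> grd_res (r + (2 * b - f) - b)"
proof -
  have res: "grd_res r = grd3 a c3 r" "r + (2 * b - f) - b = r + b - f"
    using grd_res_below_b assms parameter_bounds by simp_all
  consider "r < f" | "f \<le> r" "r < f + e" | "f + e \<le> r"
    by linarith
  then show ?thesis
  proof cases
    case 1
    then have "r = 0"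
      using f_le_1 by simp
    then show ?thesis
      using res by simp
  next
    case 2
    then have "grd3 a c3 r = r" "grd_res (r + b - f) = Suc (r + b - f - b)"
      using grd_below_a f_e a_ge_2 grd_res_below_b_e[of "r + b - f"] f_le_1 by auto
    then show ?thesis
      using res f_le_1 by simp
  next
    case 3
    have "grd3 a c3 r \<le> Suc (grd3 a c3 (r - (f + e)))"
      using grd_step[OF two_a_le_c3, of "f + e" r] f_e 3 by auto
    moreover have "grd_res (r + b - f) = Suc (grd3 a c3 (r - (f + e)))"
      using grd_res_above_b_e 3 by simp
    ultimately show ?thesis
      using res by simp
  qed
qed

lemma grd_res_wrap_b_e:
  assumes "r < b + e"
  shows "grd_res r \<le> grd_res (r + (2 * b - f) - (b + e))"
proof -
  have wrapped: "r + (2 * b - f) - (b + e) = r + b - (f + e)"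
    using parameter_bounds by simp
  show ?thesis
  proof (cases "r < b")
    case True
    then have res: "grd_res r = grd3 a c3 r"
      using grd_res_below_b by simp
    consider "r < f + e" | "f + e \<le> r" "r < f + 2 * e" | "f + 2 * e \<le> r"
      by linarith
    then show ?thesis
    proof cases
      case 1
      then have "grd3 a c3 r = r" "grd_res (r + b - (f + e)) = grd3 a c3 (r + b - (f + e))"
        using grd_below_a f_e a_ge_2 grd_res_below_b parameter_bounds by auto
      then show ?thesis
        using res wrapped le_grd_wrap_b_e_low[OF 1] by simp
    next
      case 2
      then have "grd_res (r + (2 * b - f) - (b + e)) = Suc (r - (f + e))"
        unfolding wrapped using grd_res_below_b_e[of "r + b - (f + e)"] parameter_bounds by simp
      then show ?thesis
        using res grd_mid_f_e 2 by simp
    next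
      case 3
      have "grd3 a c3 r \<le> Suc (grd3 a c3 (r - (f + 2 * e)))"
        using grd_step[OF two_a_le_c3, of "f + 2 * e" r] f_2e 3 by auto
      moreover have "grd_res (r + b - (f + e)) = Suc (grd3 a c3 (r + b - (f + e) - (b + e)))"
        using grd_res_above_b_e 3 by simp
      moreover have "r + b - (f + e) - (b + e) = r - (f + 2 * e)"
        by simp
      ultimately show ?thesis
        using res wrapped by simp
    qed
  next
    case False
    then have res: "grd_res r = Suc (r - b)" and "r - b < e"
      using grd_res_below_b_e assms by simp_all
    have "b + e \<le> r + (2 * b - f) - (b + e)"
      using False wrapped parameter_bounds by linarith
    then have "grd_res (r + (2 * b - f) - (b + e))
        = Suc (grd3 a c3 (r + (2 * b - f) - (b + e) - (b + e)))"
      by (rule grd_res_above_b_e)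
    moreover have "r + (2 * b - f) - (b + e) - (b + e) = b + (r - b) + (2 * b - f) - 2 * (b + e)"
      using False by simp
    ultimately show ?thesis
      using res le_grd_wrap_b_e_high[OF \<open>r - b < e\<close>] by simp
  qed
qed

theorem canonical: "canonical [1, a, c3, b, b + e, 2 * b - f]"
proof (rule canonicalI)
  let ?C = "[1, a, c3, b, b + e]"
  have top: "b + e < 2 * b - f"
    using parameter_bounds by linarith
  have via_residues: "grd [1, a, c3, b, b + e, 2 * b - f] w
      \<le> Suc (grd [1, a, c3, b, b + e, 2 * b - f] (w - c))"
    if "0 < c" "c \<le> b + e" "c \<le> w"
      and step: "\<And>r. r < 2 * b - f \<Longrightarrow> c \<le> r \<Longrightarrow> grd_res r \<le> Suc (grd_res (r - c))"
      and wrap: "\<And>r. r < c \<Longrightarrow> grd_res r \<le> grd_res (r + (2 * b - f) - c)"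
    for c w
  proof -
    have "grd (?C @ [2 * b - f]) w \<le> Suc (grd (?C @ [2 * b - f]) (w - c))"
    proof (rule grd_append_step)
      show "grd ?C r \<le> Suc (grd ?C (r - c))" if "r < 2 * b - f" "c \<le> r" for r
        using step[OF that] that grd_eq_grd_res by simp
      show "grd ?C r \<le> grd ?C (r + (2 * b - f) - c)" if "r < c" for r
        using wrap[OF that] that \<open>c \<le> b + e\<close> top grd_eq_grd_res by simp
    qed (use that top in auto)
    then show ?thesis
      by simp
  qed
  fix w c
  assume "c \<in> set [1, a, c3, b, b + e, 2 * b - f]" "c \<le> w"
  then consider "c = 1" | "c = a" | "c = c3" | "c = b" | "c = b + e" | "c = 2 * b - f"
    by auto
  then show "grd [1, a, c3, b, b + e, 2 * b - f] w
      \<le> Suc (grd [1, a, c3, b, b + e, 2 * b - f] (w - c))"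
  proof cases
    case 1
    show ?thesis
      unfolding 1 by (rule via_residues)
        (use grd_res_step_1 grd_res_wrap_1 parameter_bounds \<open>c \<le> w\<close> 1 in auto)
  next
    case 2
    show ?thesis
      unfolding 2 by (rule via_residues)
        (use grd_res_step_a grd_res_wrap_a parameter_bounds \<open>c \<le> w\<close> 2 a_ge_2 in auto)
  next
    case 3
    show ?thesis
      unfolding 3 by (rule via_residues)
        (use grd_res_step_c3 grd_res_wrap_c3 parameter_bounds \<open>c \<le> w\<close> 3 a_less_c in auto)
  next
    case 4
    show ?thesis
      unfolding 4 by (rule via_residues)
        (use grd_res_step_b grd_res_wrap_b \<open>c \<le> w\<close> 4 c3_less_b in auto)
  next
    case 5
    show ?thesis
      unfolding 5 by (rule via_residues)
        (use grd_res_step_b_e grd_res_wrap_b_e parameter_bounds \<open>c \<le> w\<close> 5 in auto)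
  next
    case 6
    then show ?thesis
      using grd_append_step_top[of "2 * b - f" w ?C] top \<open>c \<le> w\<close> by simp
  qed
qed simp_all

end

lemma six_coin_system_of_overshoot:
  assumes "overshoot a c3 b d m" and f: "f = 2 * a - c3" and b: "3 * a \<le> b + 1"
  shows "six_coin_system a c3 b (c3 - a) f"
proof -
  interpret overshoot a c3 b d m
    by fact
  show ?thesis
  proof unfold_locales
    show "t \<le> grd3 a c3 (b - a + t)" if "t < a" for t
      using le_grd_b_minus_a[OF that] .
    show "t \<le> grd3 a c3 (b - c3 + t)" if "t < c3 - a" for t
      using le_grd_b_minus_c3[OF that] .
    show "r \<le> Suc (grd3 a c3 (b - f - c3 + r))" if "r < a" for r
    proof -
      have "b - f - c3 + r = b - 2 * a + r"
        using f c_le_2a by simp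
      then show ?thesis
        using le_Suc_grd_b_minus_2a[OF that] by simp
    qed
    show "r \<le> Suc (grd3 a c3 (r + (2 * b - f) - c3 - (b + (c3 - a))))"
      if "r < a" "b + (c3 - a) \<le> r + (2 * b - f) - c3" for r
    proof -
      have "r + (2 * b - f) - c3 - (b + (c3 - a)) = b + r - (a + c3)" "a + c3 \<le> b + r"
        using that f two_a_le_c3 c_le_2a a_less_c b by simp_all
      then show ?thesis
        using le_Suc_grd_b_minus_a_c3[of r] that(1) by simp
    qed
    show "t \<le> grd3 a c3 (a + t + (2 * b - f) - c3 - (b + (c3 - a)))" if "t < c3 - a" for t
    proof -
      have "a + t + (2 * b - f) - c3 - (b + (c3 - a)) = b - c3 + t"
        using f two_a_le_c3 c_le_2a b by simp
      then show ?thesis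
        using le_grd_b_minus_c3[OF that] by simp
    qed
    show "r \<le> grd3 a c3 (r + (2 * b - f) - (b + (c3 - a)))" if "r < f + (c3 - a)" for r
    proof -
      have "r + (2 * b - f) - (b + (c3 - a)) = b - a + r" "r < a"
        using that f two_a_le_c3 c_le_2a a_less_c b by simp_all
      then show ?thesis
        using le_grd_b_minus_a[of r] by simp
    qed
    show "t \<le> grd3 a c3 (b + t + (2 * b - f) - 2 * (b + (c3 - a)))" if "t < c3 - a" for t
    proof -
      have "b + t + (2 * b - f) - 2 * (b + (c3 - a)) = b - c3 + t"
        using f two_a_le_c3 c_le_2a b by simp
      then show ?thesis
        using le_grd_b_minus_c3[OF that] by simp
    qed
  qed (use f b a_ge_2 a_less_c c_le_2a two_a_le_c3 in auto)
qed

lemma six_coin_system_1_2_3: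
  assumes "4 < b"
  shows "six_coin_system 2 3 b 1 0"
proof unfold_locales
  interpret three_coin_system 2 3
    by unfold_locales simp_all
  show "t \<le> grd3 2 3 (b - 2 + t)" if "t < 2" for t
    using that grd_pos[of "b - 2 + t"] assms by (cases t) auto
qed (use assms in auto)

lemma not_canonical_five_coins:
  assumes "three_coin_system a c3"
    and "b < c5" "a < 2 * b - c5" "2 * b - c5 \<noteq> c3"
  shows "\<not> canonical [1, a, c3, b, c5]"
proof -
  interpret three_coin_system a c3
    by fact
  let ?C = "[1, a, c3, b, c5]"
  have "opt ?C (2 * b) \<le> 2"
    using opt_le[of "[0, 0, 0, 2, 0]" ?C] by (simp add: numeral_eq_Suc lessThan_Suc)
  moreover have "grd ?C (2 * b) = 1 + grd3 a c3 (2 * b - c5)"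
  proof -
    have "2 * b div c5 = 1" "2 * b mod c5 = 2 * b - c5"
      using assms by (simp_all add: le_div_geq le_mod_geq)
    moreover have "(2 * b - c5) div b = 0" "(2 * b - c5) mod b = 2 * b - c5"
      using assms by auto
    ultimately show ?thesis
      by (simp add: grd_def grd3_def)
  qed
  moreover have "2 \<le> grd3 a c3 (2 * b - c5)"
    using grd_ge_2 assms by simp
  ultimately have "opt ?C (2 * b) < grd ?C (2 * b)"
    by linarith
  moreover have "0 < 2 * b"
    using assms by simp
  ultimately have "counterexample ?C (2 * b)"
    unfolding counterexample_def by blast
  then show ?thesis
    unfolding canonical_def by blast
qed

lemma canonical_with_noncanonical_prefix_1_2_3:
  assumes "4 < b"
  shows "canonical [1, 2, 3, b, b + 1, 2 * b] \<and> \<not> canonical [1, 2, 3, b, b + 1]"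
proof
  show "canonical [1, 2, 3, b, b + 1, 2 * b]"
    using six_coin_system.canonical[OF six_coin_system_1_2_3[OF assms]] by simp
  show "\<not> canonical [1, 2, 3, b, b + 1]"
    by (rule not_canonical_five_coins) (unfold_locales, use assms in auto)
qed

lemma canonical_with_noncanonical_prefix_2a:
  fixes a c3 b c5 l G :: nat
  assumes "1 < a" and c3: "c3 = 2 * a - 1 \<or> c3 = 2 * a" and c5: "c5 = b + c3 - a"
    and b: "3 * a \<le> b + 1" "b + a \<noteq> 2 * c3"
    and l: "l = (c5 + c3 - 1) div c3" and G: "G \<le> l"
      "int G = int (l * c3) - int c5 + 1 - ((int (l * c3) - int c5) div int a) * (int a - 1)"
  shows "canonical [1, a, c3, b, c5, 2 * b - (2 * a - c3)] \<and> \<not> canonical [1, a, c3, b, c5]"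
proof
  have three: "three_coin_system a c3"
    by unfold_locales (use \<open>1 < a\<close> c3 in auto)
  obtain d m where "overshoot a c3 b d m"
    using overshoot_exists[OF three _ c5 _ l G] \<open>1 < a\<close> c3 b by auto
  then have "canonical [1, a, c3, b, b + (c3 - a), 2 * b - (2 * a - c3)]"
    by (rule six_coin_system.canonical[OF six_coin_system_of_overshoot[OF _ refl b(1)]])
  then show "canonical [1, a, c3, b, c5, 2 * b - (2 * a - c3)]"
    using c5 three_coin_system.a_less_c[OF three] by simp
  show "\<not> canonical [1, a, c3, b, c5]"
    by (rule not_canonical_five_coins[OF three]) (use \<open>1 < a\<close> c3 c5 b in auto)
qed

theorem theorem10:
  fixes c2 c3 c4 c5 c6 :: nat
  defines "C \<equiv> [1, c2, c3, c4, c5, c6]"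
  defines "l \<equiv> (c5 + c3 - 1) div c3"
  assumes sys: "is_system C"
  assumes cases:
    "(c2 = 2 \<and> c3 = 3 \<and> c5 = c4 + 1 \<and> c6 = 2 * c4 \<and> c4 > 4)
     \<or> (c3 = 2 * c2 - 1 \<and> c5 = c2 + c4 - 1 \<and> c6 = 2 * c4 - 1 \<and> c4 \<ge> 3 * c2 - 1
        \<and> grd C (l * c3) \<le> l
        \<and> int (grd C (l * c3)) = int (l * c3) - int c5 + 1
              - ((int (l * c3) - int c5) div int c2) * (int c2 - 1))
     \<or> (c3 = 2 * c2 \<and> c5 = c2 + c4 \<and> c6 = 2 * c4 \<and> c4 \<ge> 3 * c2 - 1 \<and> c4 \<noteq> 3 * c2
        \<and> grd C (l * c3) \<le> l
        \<and> int (grd C (l * c3)) = int (l * c3) - int c5 + 1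
              - ((int (l * c3) - int c5) div int c2) * (int c2 - 1))"
  shows "canonical C \<and> \<not> canonical (take 5 C)"
proof -
  have "1 < c2"
    using sys by (simp add: C_def is_system_def)
  have prefix: "take 5 C = [1, c2, c3, c4, c5]"
    by (simp add: C_def numeral_eq_Suc)
  from cases consider
      (a) "c2 = 2" "c3 = 3" "c5 = c4 + 1" "c6 = 2 * c4" "4 < c4"
    | (bc) "c3 = 2 * c2 - 1 \<or> c3 = 2 * c2" "c5 = c4 + c3 - c2" "c6 = 2 * c4 - (2 * c2 - c3)"
        "3 * c2 \<le> c4 + 1" "c4 + c2 \<noteq> 2 * c3" "grd C (l * c3) \<le> l"
        "int (grd C (l * c3)) = int (l * c3) - int c5 + 1
            - ((int (l * c3) - int c5) div int c2) * (int c2 - 1)"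
    using \<open>1 < c2\<close> by (elim disjE) auto
  then show ?thesis
  proof cases
    case a
    then show ?thesis
      using canonical_with_noncanonical_prefix_1_2_3[OF a(5)] prefix by (simp add: C_def)
  next
    case bc
    then show ?thesis
      using canonical_with_noncanonical_prefix_2a[OF \<open>1 < c2\<close> bc(1,2,4,5)
          l_def[THEN meta_eq_to_obj_eq] bc(6,7)] prefix
      by (simp add: C_def)
  qed
qed

end
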